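(* Let $\mathbf s\sim\mathbb{Z}_2^{4n^2}$ be uniform, let $\mathbf A\in\mathbb{Z}_2^{2n\times n}$ be a uniformly random full-rank isotropic matrix, and let $\mathcal A$ be a deterministic polynomial-time algorithm for which there is a randomized polynomial-time algorithm $\mathcal B$ such that $\mathcal A(\mathbf s)$ is statistically indistinguishable from $\mathbf A$, $\mathcal B(\mathbf A)$ is statistically indistinguishable from $\mathbf s$, and $\Pr[\mathcal A(\mathcal B(\mathbf A))=\mathbf A]=1-\mathrm{negl}(n)$. Fix any randomized algorithms $\mathcal A_1,\mathcal A_2$ with outputs in $\{0,1\}^m$, $m=\mathrm{poly}(n)$. If $(\mathbf A,\mathcal A_1(\mathbf A))$ is computationally indistinguishable from $(\mathbf A,\mathcal A_2(\mathbf A))$, then $(\mathbf s,\mathcal A_1(\mathcal A(\mathbf s)))$ and $(\mathbf s,\mathcal A_2(\mathcal A(\mathbf s)))$ are computationally indistinguishable.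
   Context: Symplectic inner product on $\mathbb{Z}_2^{2n}$: $(\mathbf a,\mathbf b)\odot(\mathbf a',\mathbf b')=\mathbf a\cdot\mathbf b'+\mathbf a'\cdot\mathbf b\pmod2$. A uniformly random full-rank isotropic matrix in $\mathbb{Z}_2^{2n\times n}$ is uniform among matrices of column rank $n$ with pairwise symplectically orthogonal columns. Statistically indistinguishable: total variation distance $\mathrm{negl}(n)$. Computationally indistinguishable: no polynomial-time (quantum or classical) distinguisher has non-negligible advantage. *)

theory Defs
  imports "HOL-Probability.Probability"
begin

text \<open>Binary matrices in Z_2^{2n x n} are represented as lists of 2n nr,
  each row a bool list of length n; entry (r,j) is M ! r ! j.
  Bit strings in {0,1}^k are bool lists of length k.\<close>

definition is_matrix :: "nat \<Rightarrow> nat \<Rightarrow> bool list list \<Rightarrow> bool" where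
  "is_matrix nr nc M \<longleftrightarrow> length M = nr \<and> (\<forall>r\<in>set M. length r = nc)"

text \<open>Symplectic inner product of columns j and k of a 2n x n matrix:
  column j is (a,b) with a_i = M!i!j and b_i = M!(n+i)!j (i < n).\<close>
definition symp_col :: "nat \<Rightarrow> bool list list \<Rightarrow> nat \<Rightarrow> nat \<Rightarrow> bool" where
  "symp_col n M j k \<longleftrightarrow>
     odd (\<Sum>i<n. of_bool (M!i!j \<and> M!(n+i)!k) + of_bool (M!i!k \<and> M!(n+i)!j) :: nat)"

text \<open>Column rank n over Z_2: columns linearly independent, i.e. no nonempty
  set of columns sums to zero.\<close>
definition full_col_rank :: "nat \<Rightarrow> nat \<Rightarrow> bool list list \<Rightarrow> bool" where
  "full_col_rank nr nc M \<longleftrightarrow>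
     (\<forall>S. S \<subseteq> {..<nc} \<longrightarrow> S \<noteq> {} \<longrightarrow> (\<exists>r<nr. odd (card {j\<in>S. M!r!j})))"

definition isotropic_fullrank :: "nat \<Rightarrow> bool list list set" where
  "isotropic_fullrank n = {M. is_matrix (2*n) n M \<and> full_col_rank (2*n) n M \<and>
       (\<forall>j<n. \<forall>k<n. \<not> symp_col n M j k)}"

definition rand_iso :: "nat \<Rightarrow> bool list list pmf" where
  "rand_iso n = pmf_of_set (isotropic_fullrank n)"

definition rand_seed :: "nat \<Rightarrow> bool list pmf" where
  "rand_seed n = pmf_of_set {xs. length xs = 4 * n^2}"

definition negligible :: "(nat \<Rightarrow> real) \<Rightarrow> bool" where
  "negligible f \<longleftrightarrow> (\<forall>c::nat. (\<lambda>n. \<bar>f n\<bar> * real n ^ c) \<longlonglongrightarrow> 0)"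

definition tvd :: "'a pmf \<Rightarrow> 'a pmf \<Rightarrow> real" where
  "tvd p q = (SUP X. \<bar>measure_pmf.prob p X - measure_pmf.prob q X\<bar>)"

definition stat_indist :: "(nat \<Rightarrow> 'a pmf) \<Rightarrow> (nat \<Rightarrow> 'a pmf) \<Rightarrow> bool" where
  "stat_indist X Y \<longleftrightarrow> negligible (\<lambda>n. tvd (X n) (Y n))"

text \<open>Computational indistinguishability relative to a class Dist of admissible
  (polynomial-time, possibly quantum) distinguisher families; a distinguisher is
  modelled by its output distribution on each input.\<close>
definition comp_indist ::
  "(nat \<Rightarrow> 'a \<Rightarrow> bool pmf) set \<Rightarrow> (nat \<Rightarrow> 'a pmf) \<Rightarrow> (nat \<Rightarrow> 'a pmf) \<Rightarrow> bool" where
  "comp_indist Dist X Y \<longleftrightarrow>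
     (\<forall>D\<in>Dist. negligible (\<lambda>n. \<bar>pmf (X n \<bind> D n) True - pmf (Y n \<bind> D n) True\<bar>))"

definition poly_bounded :: "(nat \<Rightarrow> nat) \<Rightarrow> bool" where
  "poly_bounded m \<longleftrightarrow> (\<exists>c k. \<forall>n. m n \<le> c * n ^ k + c)"

end

theory Submission
  imports Defs
begin

text \<open>A seed distinguisher D becomes the matrix distinguisher (M, y) \<mapsto> D (\<B> M, y).
  Sampling M uniformly and then s from \<B> M is statistically close to sampling s uniformly,
  and on that joint sample \<A> s = M except with negligible probability. Hence, for A1 and A2
  alike, the experiment D faces differs negligibly from the one the matrix distinguisher
  faces, so D's advantage exceeds the matrix distinguisher's by a negligible amount only.\<close>

no_notation Infinite_Sum.abs_summable_on (infixr \<open>abs'_summable'_on\<close> 46)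

lemma expectation_eq_infsetsum:
  fixes f :: "'a \<Rightarrow> real"
  shows "measure_pmf.expectation p f = infsetsum (\<lambda>x. pmf p x * f x) UNIV"
  unfolding measure_pmf_eq_density infsetsum_def
  by (subst integral_density) auto

lemma expectation_diff_le_prob_diff:
  fixes f :: "'a \<Rightarrow> real"
  assumes "\<And>x. 0 \<le> f x" "\<And>x. f x \<le> 1"
  shows "measure_pmf.expectation p f - measure_pmf.expectation q f
           \<le> measure_pmf.prob p {x. pmf q x < pmf p x} - measure_pmf.prob q {x. pmf q x < pmf p x}"
proof -
  define X where "X = {x. pmf q x < pmf p x}"
  have summable: "(\<lambda>x. pmf p x * f x) abs_summable_on A" for p :: "'a pmf" and A
    by (rule abs_summable_on_comparison_test'[OF pmf_abs_summable])
       (use assms in \<open>auto simp: abs_mult intro: mult_left_le\<close>)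
  have "measure_pmf.expectation p f - measure_pmf.expectation q f
      = infsetsum (\<lambda>x. (pmf p x - pmf q x) * f x) UNIV"
    unfolding expectation_eq_infsetsum left_diff_distrib
    by (rule infsetsum_diff[symmetric]) (rule summable)+
  also have "\<dots> \<le> infsetsum (\<lambda>x. max 0 (pmf p x - pmf q x)) X"
  proof (rule infsetsum_mono_neutral_right)
    show "(\<lambda>x. (pmf p x - pmf q x) * f x) abs_summable_on UNIV"
      unfolding left_diff_distrib by (intro abs_summable_on_diff summable)
    show "(\<lambda>x. max 0 (pmf p x - pmf q x)) abs_summable_on X"
      by (rule abs_summable_on_comparison_test'[where g = "\<lambda>x. pmf p x + pmf q x"]) auto
    show "(pmf p x - pmf q x) * f x \<le> max 0 (pmf p x - pmf q x)" for x
      using assms[of x] by (cases "pmf q x \<le> pmf p x") (auto simp: mult_left_le mult_nonpos_nonneg)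
    show "(pmf p x - pmf q x) * f x \<le> 0" if "x \<in> UNIV - X" for x
      using that assms[of x] by (auto simp: X_def mult_nonpos_nonneg)
  qed simp
  also have "\<dots> = infsetsum (\<lambda>x. pmf p x - pmf q x) X"
    by (rule infsetsum_cong) (auto simp: X_def)
  also have "\<dots> = infsetsum (pmf p) X - infsetsum (pmf q) X"
    by (intro infsetsum_diff pmf_abs_summable)
  finally show ?thesis by (simp add: X_def measure_pmf_conv_infsetsum)
qed

lemma prob_diff_le_tvd:
  "\<bar>measure_pmf.prob p X - measure_pmf.prob q X\<bar> \<le> tvd p q"
  unfolding tvd_def
proof (rule cSUP_upper)
  have "\<bar>measure_pmf.prob p Y - measure_pmf.prob q Y\<bar> \<le> 1" for Y
    using measure_pmf.prob_le_1[of p Y] measure_pmf.prob_le_1[of q Y]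
      measure_nonneg[of p Y] measure_nonneg[of q Y] by linarith
  then show "bdd_above (range (\<lambda>Y. \<bar>measure_pmf.prob p Y - measure_pmf.prob q Y\<bar>))"
    by (intro bdd_aboveI) auto
qed simp

lemma tvd_commute: "tvd p q = tvd q p"
  unfolding tvd_def by (simp add: abs_minus_commute)

lemma integrable_measure_pmf_unit_interval:
  fixes f :: "'a \<Rightarrow> real"
  assumes "\<And>x. 0 \<le> f x" "\<And>x. f x \<le> 1"
  shows "integrable (measure_pmf p) f"
  by (rule measure_pmf.integrable_const_bound[where B=1]) (use assms in auto)

lemma abs_expectation_diff_le_tvd:
  fixes f :: "'a \<Rightarrow> real"
  assumes "\<And>x. 0 \<le> f x" "\<And>x. f x \<le> 1"
  shows "\<bar>measure_pmf.expectation p f - measure_pmf.expectation q f\<bar> \<le> tvd p q"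
proof -
  have "measure_pmf.expectation p f - measure_pmf.expectation q f \<le> tvd p q" for p q
    using expectation_diff_le_prob_diff[of f p q, OF assms]
      prob_diff_le_tvd[of p "{x. pmf q x < pmf p x}" q] by linarith
  from this[of p q] this[of q p] show ?thesis
    by (simp add: tvd_commute abs_le_iff)
qed

lemma abs_expectation_diff_le_prob:
  fixes f g :: "'a \<Rightarrow> real"
  assumes f: "\<And>x. 0 \<le> f x" "\<And>x. f x \<le> 1"
    and g: "\<And>x. 0 \<le> g x" "\<And>x. g x \<le> 1"
    and agree: "\<And>x. x \<notin> G \<Longrightarrow> f x = g x"
  shows "\<bar>measure_pmf.expectation p f - measure_pmf.expectation p g\<bar> \<le> measure_pmf.prob p G"
proof -
  have int_f: "integrable (measure_pmf p) f" and int_g: "integrable (measure_pmf p) g"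
    using f g by (auto intro: integrable_measure_pmf_unit_interval)
  have "\<bar>measure_pmf.expectation p f - measure_pmf.expectation p g\<bar>
      = \<bar>measure_pmf.expectation p (\<lambda>x. f x - g x)\<bar>"
    using int_f int_g by simp
  also have "\<dots> \<le> measure_pmf.expectation p (\<lambda>x. \<bar>f x - g x\<bar>)"
    by (rule integral_abs_bound)
  also have "\<dots> \<le> measure_pmf.expectation p (indicator G)"
  proof (rule integral_mono)
    show "\<bar>f x - g x\<bar> \<le> indicator G x" for x
      using f[of x] g[of x] agree[of x] by (cases "x \<in> G") auto
  qed (use int_f int_g in \<open>auto intro: integrable_measure_pmf_unit_interval\<close>)
  finally show ?thesis by simp
qed

lemma negligible_dominated:
  assumes "negligible g" "\<And>n. \<bar>f n\<bar> \<le> g n"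
  shows "negligible f"
  unfolding negligible_def
proof
  fix c
  have "\<forall>n. norm (\<bar>f n\<bar> * real n ^ c) \<le> \<bar>g n\<bar> * real n ^ c"
    using assms(2) by (auto intro!: mult_right_mono intro: order_trans[OF _ abs_ge_self])
  moreover have "(\<lambda>n. \<bar>g n\<bar> * real n ^ c) \<longlonglongrightarrow> 0"
    using assms(1) unfolding negligible_def by blast
  ultimately show "(\<lambda>n. \<bar>f n\<bar> * real n ^ c) \<longlonglongrightarrow> 0"
    by (rule Lim_null_comparison[OF always_eventually])
qed

lemma negligible_add:
  assumes "negligible f" "negligible g"
  shows "negligible (\<lambda>n. f n + g n)"
proof (rule negligible_dominated)
  show "negligible (\<lambda>n. \<bar>f n\<bar> + \<bar>g n\<bar>)"
    unfolding negligible_def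
  proof
    fix c
    have "(\<lambda>n. \<bar>f n\<bar> * real n ^ c + \<bar>g n\<bar> * real n ^ c) \<longlonglongrightarrow> 0"
      using assms unfolding negligible_def by (intro tendsto_add_zero) blast+
    then show "(\<lambda>n. \<bar>\<bar>f n\<bar> + \<bar>g n\<bar>\<bar> * real n ^ c) \<longlonglongrightarrow> 0"
      by (simp add: distrib_right)
  qed
qed (rule abs_triangle_ineq)

lemma reduction_advantage_diff_le:
  fixes seed :: "'s pmf" and iso :: "'m pmf" and A :: "'s \<Rightarrow> 'm" and B :: "'m \<Rightarrow> 's pmf"
    and C :: "'m \<Rightarrow> 'y pmf" and D :: "'s \<times> 'y \<Rightarrow> bool pmf"
  shows "\<bar>pmf ((seed \<bind> (\<lambda>s. map_pmf (\<lambda>y. (s, y)) (C (A s)))) \<bind> D) True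
          - pmf ((iso \<bind> (\<lambda>M. map_pmf (\<lambda>y. (M, y)) (C M))) \<bind> (\<lambda>(M, y). B M \<bind> (\<lambda>s. D (s, y)))) True\<bar>
         \<le> tvd (iso \<bind> B) seed
           + (1 - measure_pmf.prob (iso \<bind> (\<lambda>M. map_pmf (\<lambda>s. A s = M) (B M))) {True})"
proof -
  define \<phi> where "\<phi> s = pmf (C (A s) \<bind> (\<lambda>y. D (s, y))) True" for s
  define \<psi> where "\<psi> z = pmf (C (fst z) \<bind> (\<lambda>y. D (snd z, y))) True" for z
  define J where "J = iso \<bind> (\<lambda>M. map_pmf (\<lambda>s. (M, s)) (B M))"
  have \<phi>_unit: "0 \<le> \<phi> s" "\<phi> s \<le> 1" for s
    unfolding \<phi>_def by (auto simp: pmf_le_1)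
  have \<psi>_unit: "0 \<le> \<psi> z" "\<psi> z \<le> 1" for z
    unfolding \<psi>_def by (auto simp: pmf_le_1)
  have seed_side: "pmf ((seed \<bind> (\<lambda>s. map_pmf (\<lambda>y. (s, y)) (C (A s)))) \<bind> D) True
      = measure_pmf.expectation seed \<phi>"
    unfolding \<phi>_def by (simp add: map_pmf_def bind_assoc_pmf bind_return_pmf pmf_bind)
  have "(iso \<bind> (\<lambda>M. map_pmf (\<lambda>y. (M, y)) (C M))) \<bind> (\<lambda>(M, y). B M \<bind> (\<lambda>s. D (s, y)))
      = J \<bind> (\<lambda>z. C (fst z) \<bind> (\<lambda>y. D (snd z, y)))"
    unfolding J_def
    by (simp add: map_pmf_def bind_assoc_pmf bind_return_pmf, subst bind_commute_pmf, rule refl)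
  then have iso_side: "pmf ((iso \<bind> (\<lambda>M. map_pmf (\<lambda>y. (M, y)) (C M)))
        \<bind> (\<lambda>(M, y). B M \<bind> (\<lambda>s. D (s, y)))) True = measure_pmf.expectation J \<psi>"
    unfolding \<psi>_def by (simp add: pmf_bind)
  have "map_pmf snd J = iso \<bind> B"
    unfolding J_def by (simp add: map_bind_pmf map_pmf_comp)
  then have snd_J: "measure_pmf.expectation J (\<lambda>z. \<phi> (snd z)) = measure_pmf.expectation (iso \<bind> B) \<phi>"
    by (simp flip: integral_map_pmf)
  have "iso \<bind> (\<lambda>M. map_pmf (\<lambda>s. A s = M) (B M)) = map_pmf (\<lambda>z. A (snd z) = fst z) J"
    unfolding J_def by (simp add: map_bind_pmf map_pmf_comp)
  then have "measure_pmf.prob J {z. A (snd z) = fst z}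
      = measure_pmf.prob (iso \<bind> (\<lambda>M. map_pmf (\<lambda>s. A s = M) (B M))) {True}"
    by (simp add: measure_map_pmf vimage_def)
  then have inversion_failure: "measure_pmf.prob J {z. A (snd z) \<noteq> fst z}
      = 1 - measure_pmf.prob (iso \<bind> (\<lambda>M. map_pmf (\<lambda>s. A s = M) (B M))) {True}"
    using measure_pmf.prob_compl[of "{z. A (snd z) = fst z}" J]
    by (simp add: set_diff_eq)
  have agree: "\<phi> (snd z) = \<psi> z" if "A (snd z) = fst z" for z
    using that by (simp add: \<phi>_def \<psi>_def)
  have "\<bar>measure_pmf.expectation (iso \<bind> B) \<phi> - measure_pmf.expectation seed \<phi>\<bar> \<le> tvd (iso \<bind> B) seed"
    by (rule abs_expectation_diff_le_tvd) (use \<phi>_unit in auto)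
  moreover have "\<bar>measure_pmf.expectation J (\<lambda>z. \<phi> (snd z)) - measure_pmf.expectation J \<psi>\<bar>
      \<le> measure_pmf.prob J {z. A (snd z) \<noteq> fst z}"
    by (rule abs_expectation_diff_le_prob) (use \<phi>_unit \<psi>_unit agree in auto)
  ultimately show ?thesis
    unfolding seed_side iso_side using snd_J inversion_failure by linarith
qed

theorem corollary6p3:
  fixes PT_det :: "(nat \<Rightarrow> bool list \<Rightarrow> bool list list) set"
    and PT_rand :: "(nat \<Rightarrow> bool list list \<Rightarrow> bool list pmf) set"
    and DistS :: "(nat \<Rightarrow> bool list \<times> bool list \<Rightarrow> bool pmf) set"
    and DistA :: "(nat \<Rightarrow> bool list list \<times> bool list \<Rightarrow> bool pmf) set"
    and \<A> :: "nat \<Rightarrow> bool list \<Rightarrow> bool list list"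
    and \<B> :: "nat \<Rightarrow> bool list list \<Rightarrow> bool list pmf"
    and A1 A2 :: "nat \<Rightarrow> bool list list \<Rightarrow> bool list pmf"
    and m :: "nat \<Rightarrow> nat"
  assumes reduction_closed:
      "\<And>B D. B \<in> PT_rand \<Longrightarrow> D \<in> DistS \<Longrightarrow>
         (\<lambda>n (M, y). B n M \<bind> (\<lambda>s. D n (s, y))) \<in> DistA"
    and A_eff: "\<A> \<in> PT_det"
    and B_eff: "\<B> \<in> PT_rand"
    and A_stat: "stat_indist (\<lambda>n. map_pmf (\<A> n) (rand_seed n)) rand_iso"
    and B_stat: "stat_indist (\<lambda>n. rand_iso n \<bind> \<B> n) rand_seed"
    and AB_inv: "negligible (\<lambda>n. 1 - measure_pmf.prob
                    (rand_iso n \<bind> (\<lambda>M. map_pmf (\<lambda>s. \<A> n s = M) (\<B> n M))) {True})"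
    and m_poly: "poly_bounded m"
    and A1_out: "\<And>n M. set_pmf (A1 n M) \<subseteq> {ys. length ys = m n}"
    and A2_out: "\<And>n M. set_pmf (A2 n M) \<subseteq> {ys. length ys = m n}"
    and hyp: "comp_indist DistA
               (\<lambda>n. rand_iso n \<bind> (\<lambda>M. map_pmf (\<lambda>y. (M, y)) (A1 n M)))
               (\<lambda>n. rand_iso n \<bind> (\<lambda>M. map_pmf (\<lambda>y. (M, y)) (A2 n M)))"
  shows "comp_indist DistS
               (\<lambda>n. rand_seed n \<bind> (\<lambda>s. map_pmf (\<lambda>y. (s, y)) (A1 n (\<A> n s))))
               (\<lambda>n. rand_seed n \<bind> (\<lambda>s. map_pmf (\<lambda>y. (s, y)) (A2 n (\<A> n s))))"
proof (unfold comp_indist_def, intro ballI)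
  fix D assume "D \<in> DistS"
  define D' where "D' = (\<lambda>n (M, y). \<B> n M \<bind> (\<lambda>s. D n (s, y)))"
  define err where "err n = tvd (rand_iso n \<bind> \<B> n) (rand_seed n) + (1 - measure_pmf.prob
      (rand_iso n \<bind> (\<lambda>M. map_pmf (\<lambda>s. \<A> n s = M) (\<B> n M))) {True})" for n
  let ?seed_adv = "\<lambda>C n. pmf (rand_seed n \<bind> (\<lambda>s. map_pmf (\<lambda>y. (s, y)) (C n (\<A> n s))) \<bind> D n) True"
  let ?iso_adv = "\<lambda>C n. pmf (rand_iso n \<bind> (\<lambda>M. map_pmf (\<lambda>y. (M, y)) (C n M)) \<bind> D' n) True"
  have "D' \<in> DistA"
    unfolding D'_def using reduction_closed[OF B_eff \<open>D \<in> DistS\<close>] .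
  then have iso_negl: "negligible (\<lambda>n. \<bar>?iso_adv A1 n - ?iso_adv A2 n\<bar>)"
    by (rule bspec[OF hyp[unfolded comp_indist_def]])
  have err_negl: "negligible err"
    unfolding err_def using B_stat AB_inv unfolding stat_indist_def by (rule negligible_add)
  have hybrid: "\<bar>?seed_adv C n - ?iso_adv C n\<bar> \<le> err n" for C n
    unfolding err_def D'_def by (rule reduction_advantage_diff_le)
  show "negligible (\<lambda>n. \<bar>?seed_adv A1 n - ?seed_adv A2 n\<bar>)"
  proof (rule negligible_dominated)
    show "negligible (\<lambda>n. err n + (err n + \<bar>?iso_adv A1 n - ?iso_adv A2 n\<bar>))"
      by (intro negligible_add err_negl iso_negl)
    show "\<bar>\<bar>?seed_adv A1 n - ?seed_adv A2 n\<bar>\<bar>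
        \<le> err n + (err n + \<bar>?iso_adv A1 n - ?iso_adv A2 n\<bar>)" for n
      using hybrid[where C=A1 and n=n] hybrid[where C=A2 and n=n] by linarith
  qed
qed

end
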